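(* For every $\Phi\in\mathcal C$ one has $\mathcal L(\Phi)\in\mathcal C$, and there is a constant $C_6$ (independent of $\Phi$ and $n$) such that for all $n\ge1$ \[ |\mathcal L^n(\Phi)|_\beta\le|\Phi|_\beta\,(C_E\eta)^{\beta n}+C_6|\Phi|_\infty\,C_E^\beta\sum_{i=0}^\infty(C_E\eta)^{i\beta}. \]
   Context: Let $I=[0,1)$ carry a metric $d_I$, fix $\theta\in(0,1)$, and let $\Omega=I^{\mathbb Z}$ with metric $d(x,y)=\sup_{k\in\mathbb Z}\theta^{|k|}d_I(x_k,y_k)$. Let $\tau:I\to I$ have full branches, so that $b=\#\tau^{-1}(t)$ is constant; let $p_\tau$ be a fixed point of $\tau$. Assume there is $\eta\in(0,1)$ such that every inverse branch $\zeta$ of $\tau$ satisfies $d_I(\zeta(s),\zeta(t))\le\eta\,d_I(s,t)$. Let $(\bar\tau x)_i=\tau(x_i)$. Let $\pi_k:\Omega\to\Omega$ keep the coordinates $|i|\le k$ and set the others to $p_\tau$; $\Phi_k=\Phi\circ\pi_k$. Fix $\beta\in(0,1]$; $|\Phi|_\infty=\sup|\Phi|$, $|\Phi|_\beta=\sup_{k\in\mathbb N}\sup_{x\neq y}|\Phi_k(x)-\Phi_k(y)|/d(x,y)^\beta$, $\|\Phi\|=|\Phi|_\infty+|\Phi|_\beta$, $\mathcal C=\{\Phi\in C(\Omega):\|\Phi\|<\infty\}$. An inverse branch of order $k$ is a choice $\zeta=(\zeta_j)_{|j|\le k}$ of inverse branches of $\tau$, with $(\zeta_x)_j=\zeta_j(x_j)$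 for $|j|\le k$, $(\zeta_x)_j=x_j$ otherwise; $b_k=b^{2k+1}$. For real $f\in\mathcal C$, $P_k\Phi(x)=b_k^{-1}\sum_{|\zeta|=k}e^{f(\pi_k\zeta_x)}\Phi(\pi_k\zeta_x)$ and $P\Phi=\lim_kP_k\Phi$ pointwise. Fix a Borel probability measure $\nu_0$ with $P^*\nu_0=\lambda\nu_0$, $\lambda=\int P\mathbf 1\,d\nu_0$, and let $h\in\mathcal C$ be the unique strictly positive function with $Ph=\lambda h$, $\nu_0(h)=1$, $h(x)\le \exp\!\big(|f|_\beta\frac{\eta^\beta}{1-\eta^\beta}d(x,y)^\beta\big)h(y)$ for all $x,y$. Define $L\Phi=P(h\Phi)/(\lambda h)$. Let $\sigma$ be the shift $(\sigma x)_i=x_{i+1}$. Let $E:\Omega\to\Omega$ be invertible and suppose there is $C_E\in(0,\eta^{-1})$ with $d(\sigma^nE^{-1}x,\sigma^nE^{-1}y)\le C_E\,d(\sigma^nx,\sigma^ny)$ for all $n\in\mathbb Z$ and $x,y\in\Omega$. The coupled map is $T=E\circ\bar\tau$ and $\mathcal L\Phi(x)=L(\Phi)(E^{-1}x)$. *)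

theory Defs
  imports "HOL-Probability.Probability"
begin

type_synonym pt = "int \<Rightarrow> real"

definition Iset :: "real set" where
  "Iset = {0..<1}"

definition Omega :: "pt set" where
  "Omega = {x. \<forall>i. x i \<in> Iset}"

definition dOm :: "(real \<Rightarrow> real \<Rightarrow> real) \<Rightarrow> real \<Rightarrow> pt \<Rightarrow> pt \<Rightarrow> real" where
  "dOm dI \<theta> x y = (SUP k::int. \<theta> ^ nat \<bar>k\<bar> * dI (x k) (y k))"

definition metric_on :: "real set \<Rightarrow> (real \<Rightarrow> real \<Rightarrow> real) \<Rightarrow> bool" where
  "metric_on A dI \<longleftrightarrow>
     (\<forall>s\<in>A. \<forall>t\<in>A. 0 \<le> dI s t \<and> (dI s t = 0 \<longleftrightarrow> s = t) \<and> dI s t = dI t s) \<and>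
     (\<forall>s\<in>A. \<forall>t\<in>A. \<forall>u\<in>A. dI s u \<le> dI s t + dI t u)"

definition pik :: "real \<Rightarrow> nat \<Rightarrow> pt \<Rightarrow> pt" where
  "pik p k x = (\<lambda>i. if \<bar>i\<bar> \<le> int k then x i else p)"

definition shiftn :: "int \<Rightarrow> pt \<Rightarrow> pt" where
  "shiftn n x = (\<lambda>i. x (i + n))"

text \<open>Inverse branches of tau are indexed by j < b via zeta j.
  An inverse branch of order k is a choice c : {-k..k} -> {..<b};
  zeta_x is given by branch_apply.\<close>
definition branch_apply :: "(nat \<Rightarrow> real \<Rightarrow> real) \<Rightarrow> nat \<Rightarrow> (int \<Rightarrow> nat) \<Rightarrow> pt \<Rightarrow> pt" where
  "branch_apply zeta k c x = (\<lambda>j. if \<bar>j\<bar> \<le> int k then zeta (c j) (x j) else x j)"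

definition branches :: "nat \<Rightarrow> nat \<Rightarrow> (int \<Rightarrow> nat) set" where
  "branches b k = PiE {- int k .. int k} (\<lambda>_. {..<b})"

definition Pk :: "nat \<Rightarrow> (nat \<Rightarrow> real \<Rightarrow> real) \<Rightarrow> real \<Rightarrow> (pt \<Rightarrow> real) \<Rightarrow> nat
                   \<Rightarrow> (pt \<Rightarrow> real) \<Rightarrow> pt \<Rightarrow> real" where
  "Pk b zeta p f k \<Phi> x =
     (1 / real b ^ (2 * k + 1)) *
     (\<Sum>c\<in>branches b k. exp (f (pik p k (branch_apply zeta k c x))) *
                          \<Phi> (pik p k (branch_apply zeta k c x)))"

definition Pop :: "nat \<Rightarrow> (nat \<Rightarrow> real \<Rightarrow> real) \<Rightarrow> real \<Rightarrow> (pt \<Rightarrow> real)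
                   \<Rightarrow> (pt \<Rightarrow> real) \<Rightarrow> pt \<Rightarrow> real" where
  "Pop b zeta p f \<Phi> x = lim (\<lambda>k. Pk b zeta p f k \<Phi> x)"

definition sup_norm :: "(pt \<Rightarrow> real) \<Rightarrow> ereal" where
  "sup_norm \<Phi> = (SUP x\<in>Omega. ereal \<bar>\<Phi> x\<bar>)"

definition holder_semi :: "(pt \<Rightarrow> pt \<Rightarrow> real) \<Rightarrow> real \<Rightarrow> real \<Rightarrow> (pt \<Rightarrow> real) \<Rightarrow> ereal" where
  "holder_semi d p \<beta> \<Phi> =
     (SUP k::nat. SUP xy\<in>{(x, y). x \<in> Omega \<and> y \<in> Omega \<and> x \<noteq> y}.
        ereal (\<bar>\<Phi> (pik p k (fst xy)) - \<Phi> (pik p k (snd xy))\<bar> / (d (fst xy) (snd xy)) powr \<beta>))"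

definition cont_d :: "(pt \<Rightarrow> pt \<Rightarrow> real) \<Rightarrow> (pt \<Rightarrow> real) \<Rightarrow> bool" where
  "cont_d d \<Phi> \<longleftrightarrow>
     (\<forall>x\<in>Omega. \<forall>\<epsilon>>0. \<exists>\<delta>>0. \<forall>y\<in>Omega. d x y < \<delta> \<longrightarrow> \<bar>\<Phi> y - \<Phi> x\<bar> < \<epsilon>)"

definition Cspace :: "(pt \<Rightarrow> pt \<Rightarrow> real) \<Rightarrow> real \<Rightarrow> real \<Rightarrow> (pt \<Rightarrow> real) set" where
  "Cspace d p \<beta> = {\<Phi>. cont_d d \<Phi> \<and> sup_norm \<Phi> + holder_semi d p \<beta> \<Phi> < \<infinity>}"

definition open_d :: "(pt \<Rightarrow> pt \<Rightarrow> real) \<Rightarrow> pt set \<Rightarrow> bool" where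
  "open_d d U \<longleftrightarrow> U \<subseteq> Omega \<and> (\<forall>x\<in>U. \<exists>r>0. {y\<in>Omega. d x y < r} \<subseteq> U)"

definition borel_d :: "(pt \<Rightarrow> pt \<Rightarrow> real) \<Rightarrow> pt set set" where
  "borel_d d = sigma_sets Omega {U. open_d d U}"

definition Lop :: "nat \<Rightarrow> (nat \<Rightarrow> real \<Rightarrow> real) \<Rightarrow> real \<Rightarrow> (pt \<Rightarrow> real) \<Rightarrow> (pt \<Rightarrow> real) \<Rightarrow> real
                   \<Rightarrow> (pt \<Rightarrow> real) \<Rightarrow> pt \<Rightarrow> real" where
  "Lop b zeta p f h lam \<Phi> x = Pop b zeta p f (\<lambda>y. h y * \<Phi> y) x / (lam * h x)"

definition Lcal :: "nat \<Rightarrow> (nat \<Rightarrow> real \<Rightarrow> real) \<Rightarrow> real \<Rightarrow> (pt \<Rightarrow> real) \<Rightarrow> (pt \<Rightarrow> real) \<Rightarrow> real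
                   \<Rightarrow> (pt \<Rightarrow> pt) \<Rightarrow> (pt \<Rightarrow> real) \<Rightarrow> pt \<Rightarrow> real" where
  "Lcal b zeta p f h lam E \<Phi> x = Lop b zeta p f h lam \<Phi> (inv_into Omega E x)"

end

theory Submission
  imports Defs
begin

text \<open>\<open>L\<Phi>(u)\<close> is the limit of weighted averages of \<open>\<Phi>\<close> over the branch points
  \<open>\<pi>\<^sub>k \<zeta>\<^sub>u\<close>, with weights \<open>e\<^sup>f h\<close> at those points. The inverse branches contract \<open>d\<close> by \<open>\<eta>\<close>,
  so the values of \<open>\<Phi>\<close> at corresponding branch points of \<open>u\<close> and \<open>v\<close> differ by at most
  \<open>|\<Phi>|\<^sub>\<beta> \<eta>\<^sup>\<beta> d(u,v)\<^sup>\<beta>\<close>, while (by the Hoelder bound on \<open>log h\<close>) the weights differ by a factor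
  \<open>exp (O(d(u,v)\<^sup>\<beta>))\<close>. Hence \<open>|L\<Phi>|\<^sub>\<infinity> \<le> |\<Phi>|\<^sub>\<infinity>\<close> and
  \<open>|L\<Phi>|\<^sub>\<beta> \<le> \<eta>\<^sup>\<beta>|\<Phi>|\<^sub>\<beta> + C\<^sub>6|\<Phi>|\<^sub>\<infinity>\<close>. Composing with \<open>E\<^sup>-\<^sup>1\<close> costs a factor \<open>C\<^sub>E\<^sup>\<beta>\<close>, and
  iterating the resulting affine inequality gives the geometric bound.\<close>

lemma convergent_if_increments_le_geometric:
  fixes X :: "nat \<Rightarrow> real"
  assumes "\<And>k. \<bar>X (Suc k) - X k\<bar> \<le> c * q ^ k" "0 \<le> q" "q < 1"
  shows "convergent X"
proof -
  have "summable (\<lambda>k. X (Suc k) - X k)"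
    by (rule summable_comparison_test[of _ "\<lambda>k. c * q ^ k"])
       (use assms in \<open>auto intro!: summable_mult summable_geometric\<close>)
  then have "(\<lambda>n. X 0 + (\<Sum>i<n. X (Suc i) - X i)) \<longlonglongrightarrow> X 0 + (\<Sum>k. X (Suc k) - X k)"
    by (intro tendsto_add tendsto_const summable_LIMSEQ)
  then show ?thesis
    by (auto simp: sum_lessThan_telescope intro: convergentI)
qed

lemma linear_recurrence_le:
  fixes a :: "nat \<Rightarrow> real"
  assumes step: "\<And>n. a (Suc n) \<le> q * a n + c" and q: "0 \<le> q"
  shows "a n \<le> q ^ n * a 0 + c * (\<Sum>i<n. q ^ i)"
proof (induction n)
  case (Suc n)
  have "a (Suc n) \<le> q * (q ^ n * a 0 + c * (\<Sum>i<n. q ^ i)) + c"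
    using step[of n] mult_left_mono[OF Suc q] by linarith
  also have "\<dots> = q ^ Suc n * a 0 + c * (1 + q * (\<Sum>i<n. q ^ i))"
    by (simp add: algebra_simps)
  also have "1 + q * (\<Sum>i<n. q ^ i) = (\<Sum>i<Suc n. q ^ i)"
    by (simp add: sum.lessThan_Suc_shift sum_distrib_left del: sum.lessThan_Suc)
  finally show ?case .
qed simp

lemma sum_PiE_insert_indep:
  assumes "finite S" "x \<notin> S" "finite (T x)"
    and indep: "\<And>g y. g \<in> PiE S T \<Longrightarrow> y \<in> T x \<Longrightarrow> F (g(x := y)) = F g"
  shows "(\<Sum>c\<in>PiE (insert x S) T. F c) = real (card (T x)) * (\<Sum>g\<in>PiE S T. F g)"
proof -
  have "(\<Sum>c\<in>PiE (insert x S) T. F c) = (\<Sum>yg\<in>T x \<times> PiE S T. F ((\<lambda>(y, g). g(x := y)) yg))"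
    unfolding PiE_insert_eq by (subst sum.reindex) (auto simp: inj_combinator assms)
  also have "\<dots> = (\<Sum>y\<in>T x. \<Sum>g\<in>PiE S T. F (g(x := y)))"
    by (simp add: sum.cartesian_product prod.case_distrib)
  also have "\<dots> = (\<Sum>y\<in>T x. \<Sum>g\<in>PiE S T. F g)"
    by (intro sum.cong refl) (simp add: indep)
  finally show ?thesis by simp
qed

lemma abs_exp_diff_le:
  fixes s t M :: real
  assumes "s \<le> M" "t \<le> M"
  shows "\<bar>exp s - exp t\<bar> \<le> exp M * \<bar>s - t\<bar>"
proof -
  have *: "exp v - exp u \<le> exp M * (v - u)" if "u \<le> v" "v \<le> M" for u v :: real
  proof -
    have "exp v * (1 + (u - v)) \<le> exp v * exp (u - v)"
      by (intro mult_left_mono exp_ge_add_one_self) auto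
    then have "exp v - exp u \<le> exp v * (v - u)"
      by (simp add: exp_diff algebra_simps)
    also have "\<dots> \<le> exp M * (v - u)"
      using that by (intro mult_right_mono) auto
    finally show ?thesis .
  qed
  show ?thesis
    using *[of s t] *[of t s] assms by (cases "s \<le> t") (auto simp: abs_if)
qed

lemma exp_minus_one_le: "exp t - 1 \<le> t * exp (t::real)"
proof -
  have "exp t * (1 - t) \<le> exp t * exp (- t)"
    using exp_ge_add_one_self[of "- t"] by (intro mult_left_mono) auto
  then show ?thesis
    by (simp add: exp_minus algebra_simps)
qed

lemma abs_weighted_average_le:
  fixes w \<psi> :: "'a \<Rightarrow> real"
  assumes "finite I" "I \<noteq> {}" "\<And>c. c \<in> I \<Longrightarrow> 0 < w c" "\<And>c. c \<in> I \<Longrightarrow> \<bar>\<psi> c\<bar> \<le> B"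
  shows "\<bar>(\<Sum>c\<in>I. w c * \<psi> c) / (\<Sum>c\<in>I. w c)\<bar> \<le> B"
proof -
  have W: "0 < (\<Sum>c\<in>I. w c)"
    using assms by (intro sum_pos) auto
  have "\<bar>w c * \<psi> c\<bar> \<le> w c * B" if "c \<in> I" for c
    using assms(3,4)[OF that] by (simp add: abs_mult mult_left_mono)
  then have "\<bar>\<Sum>c\<in>I. w c * \<psi> c\<bar> \<le> (\<Sum>c\<in>I. w c * B)"
    by (intro order_trans[OF sum_abs] sum_mono)
  also have "\<dots> = B * (\<Sum>c\<in>I. w c)"
    by (subst sum_distrib_right[symmetric]) (rule mult.commute)
  finally show ?thesis
    using W by (simp add: pos_divide_le_eq)
qed

lemma normalised_weight_le:
  fixes p q P Q r :: real
  assumes "p \<le> exp r * q" "Q \<le> exp r * P" "0 < P" "0 < Q" "0 < q"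
  shows "p / P \<le> exp (2 * r) * (q / Q)"
proof -
  have "p * Q \<le> (exp r * q) * (exp r * P)"
    using assms by (intro mult_mono) auto
  then show ?thesis
    using assms(3,4) by (simp add: field_simps mult_exp_exp)
qed

lemma weighted_averages_diff_le:
  fixes p q \<phi> :: "'a \<Rightarrow> real"
  assumes fin: "finite I" and ne: "I \<noteq> {}"
    and pos: "\<And>c. c \<in> I \<Longrightarrow> 0 < p c" "\<And>c. c \<in> I \<Longrightarrow> 0 < q c"
    and pq: "\<And>c. c \<in> I \<Longrightarrow> p c \<le> exp r * q c" and qp: "\<And>c. c \<in> I \<Longrightarrow> q c \<le> exp r * p c"
    and bd: "\<And>c. c \<in> I \<Longrightarrow> \<bar>\<phi> c\<bar> \<le> S" and r: "0 \<le> r"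
  shows "\<bar>(\<Sum>c\<in>I. p c * \<phi> c) / (\<Sum>c\<in>I. p c) - (\<Sum>c\<in>I. q c * \<phi> c) / (\<Sum>c\<in>I. q c)\<bar>
           \<le> S * (2 * (exp (2 * r) - 1))"
proof -
  define P where "P = (\<Sum>c\<in>I. p c)"
  define Q where "Q = (\<Sum>c\<in>I. q c)"
  define e where "e = exp (2 * r)"
  have P: "0 < P" and Q: "0 < Q"
    unfolding P_def Q_def using fin ne pos by (auto intro: sum_pos)
  have "P \<le> exp r * Q" "Q \<le> exp r * P"
    unfolding P_def Q_def sum_distrib_left by (auto intro: sum_mono pq qp)
  then have ratio: "p c / P \<le> e * (q c / Q)" "q c / Q \<le> e * (p c / P)" if "c \<in> I" for c
    unfolding e_def using that pos P Q pq qp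
      normalised_weight_le[where p = "p c" and q = "q c" and P = P and Q = Q and r = r]
      normalised_weight_le[where p = "q c" and q = "p c" and P = Q and Q = P and r = r]
    by auto
  have e: "1 \<le> e"
    unfolding e_def using r by simp
  have S: "0 \<le> S"
    using bd ne by (meson abs_ge_zero all_not_in_conv order_trans)
  have mutual: "\<bar>x - y\<bar> \<le> (e - 1) * (x + y)"
    if "x \<le> e * y" "y \<le> e * x" "0 \<le> (e - 1) * x" "0 \<le> (e - 1) * y" for x y :: real
    using that by (simp add: abs_if algebra_simps)
  have diff: "\<bar>p c / P - q c / Q\<bar> \<le> (e - 1) * (p c / P + q c / Q)" if c: "c \<in> I" for c
    using ratio[OF c] e pos[OF c] P Q
    by (intro mutual mult_nonneg_nonneg divide_nonneg_pos) (auto simp: less_imp_le)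
  have "(\<Sum>c\<in>I. p c * \<phi> c) / P - (\<Sum>c\<in>I. q c * \<phi> c) / Q = (\<Sum>c\<in>I. \<phi> c * (p c / P - q c / Q))"
    by (simp add: sum_divide_distrib sum_subtractf algebra_simps)
  also have "\<bar>\<dots>\<bar> \<le> (\<Sum>c\<in>I. S * ((e - 1) * (p c / P + q c / Q)))"
    by (intro order_trans[OF sum_abs] sum_mono)
       (auto simp: abs_mult intro!: mult_mono bd diff S)
  also have "\<dots> = S * (e - 1) * (\<Sum>c\<in>I. p c / P + q c / Q)"
    by (simp add: sum_distrib_left mult.assoc)
  also have "\<dots> = S * (e - 1) * ((\<Sum>c\<in>I. p c) / P + (\<Sum>c\<in>I. q c) / Q)"
    by (simp add: sum.distrib sum_divide_distrib)
  also have "\<dots> = S * (2 * (e - 1))"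
    using P Q unfolding P_def Q_def by simp
  finally show ?thesis
    unfolding P_def Q_def e_def .
qed

lemma abs_weighted_averages_diff_le:
  fixes p q \<phi> \<psi> :: "'a \<Rightarrow> real"
  assumes fin: "finite I" and ne: "I \<noteq> {}"
    and pos: "\<And>c. c \<in> I \<Longrightarrow> 0 < p c" "\<And>c. c \<in> I \<Longrightarrow> 0 < q c"
    and pq: "\<And>c. c \<in> I \<Longrightarrow> p c \<le> exp r * q c" and qp: "\<And>c. c \<in> I \<Longrightarrow> q c \<le> exp r * p c"
    and \<phi>\<psi>: "\<And>c. c \<in> I \<Longrightarrow> \<bar>\<phi> c - \<psi> c\<bar> \<le> \<epsilon>"
    and \<psi>: "\<And>c. c \<in> I \<Longrightarrow> \<bar>\<psi> c\<bar> \<le> S" and r: "0 \<le> r"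
  shows "\<bar>(\<Sum>c\<in>I. p c * \<phi> c) / (\<Sum>c\<in>I. p c) - (\<Sum>c\<in>I. q c * \<psi> c) / (\<Sum>c\<in>I. q c)\<bar>
           \<le> \<epsilon> + S * (2 * (exp (2 * r) - 1))"
proof -
  have "(\<Sum>c\<in>I. p c * \<phi> c) / (\<Sum>c\<in>I. p c) - (\<Sum>c\<in>I. q c * \<psi> c) / (\<Sum>c\<in>I. q c) =
     (\<Sum>c\<in>I. p c * (\<phi> c - \<psi> c)) / (\<Sum>c\<in>I. p c)
     + ((\<Sum>c\<in>I. p c * \<psi> c) / (\<Sum>c\<in>I. p c) - (\<Sum>c\<in>I. q c * \<psi> c) / (\<Sum>c\<in>I. q c))"
    by (simp add: diff_divide_distrib right_diff_distrib sum_subtractf)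
  also have "\<bar>\<dots>\<bar> \<le> \<epsilon> + S * (2 * (exp (2 * r) - 1))"
  proof (rule order_trans[OF abs_triangle_ineq add_mono])
    show "\<bar>(\<Sum>c\<in>I. p c * (\<phi> c - \<psi> c)) / (\<Sum>c\<in>I. p c)\<bar> \<le> \<epsilon>"
      by (rule abs_weighted_average_le) (use fin ne pos \<phi>\<psi> in auto)
    show "\<bar>(\<Sum>c\<in>I. p c * \<psi> c) / (\<Sum>c\<in>I. p c) - (\<Sum>c\<in>I. q c * \<psi> c) / (\<Sum>c\<in>I. q c)\<bar>
        \<le> S * (2 * (exp (2 * r) - 1))"
      by (rule weighted_averages_diff_le) (use fin ne pos pq qp \<psi> r in auto)
  qed
  finally show ?thesis .
qed

lemma const_in_Omega: "t \<in> Iset \<Longrightarrow> (\<lambda>_. t) \<in> Omega"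
  unfolding Omega_def by simp

lemma zero_in_Omega: "(\<lambda>_. 0) \<in> Omega"
  and half_in_Omega: "(\<lambda>_. 1 / 2) \<in> Omega"
  by (rule const_in_Omega, simp add: Iset_def)+

lemma zero_neq_half: "(\<lambda>_. 0) \<noteq> (\<lambda>_::int. 1 / 2 :: real)"
  by (metis zero_neq_numeral divide_eq_0_iff one_neq_zero)

lemma pik_idem [simp]: "pik p k (pik p k x) = pik p k x"
  unfolding pik_def by auto

lemma pik_Suc_pik: "pik p (Suc k) (pik p k x) = pik p k x"
  unfolding pik_def by auto

lemma pik_branch_apply_Suc:
  "pik p k (branch_apply zeta (Suc k) c x) = pik p k (branch_apply zeta k c x)"
  unfolding pik_def branch_apply_def by auto

lemma pik_in_Omega: "p \<in> Iset \<Longrightarrow> x \<in> Omega \<Longrightarrow> pik p k x \<in> Omega"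
  unfolding Omega_def pik_def by auto

lemma branches_less: "c \<in> branches b k \<Longrightarrow> \<bar>j\<bar> \<le> int k \<Longrightarrow> c j < b"
  unfolding branches_def by (auto simp: PiE_def Pi_def abs_le_iff)

lemma branch_apply_in_Omega:
  "\<forall>j<b. \<forall>t\<in>Iset. zeta j t \<in> Iset \<Longrightarrow> c \<in> branches b k \<Longrightarrow> x \<in> Omega
   \<Longrightarrow> branch_apply zeta k c x \<in> Omega"
  unfolding Omega_def branch_apply_def using branches_less by auto

lemma finite_branches: "finite (branches b k)"
  unfolding branches_def by (auto intro: finite_PiE)

lemma card_branches: "card (branches b k) = b ^ (2 * k + 1)"
proof -
  have "card {- int k..int k} = 2 * k + 1"
    by simp
  then show ?thesis
    unfolding branches_def by (simp add: card_PiE)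
qed

lemma branches_nonempty: "0 < b \<Longrightarrow> branches b k \<noteq> {}"
  unfolding branches_def by (auto simp: PiE_eq_empty_iff)

text \<open>Branch choices at the two new coordinates \<open>\<plusminus>(k+1)\<close> do not affect the truncation to
  \<open>[-k, k]\<close>, so they only contribute a factor \<open>b\<^sup>2\<close>.\<close>
lemma sum_branches_Suc:
  "(\<Sum>c\<in>branches b (Suc k). G (pik p k (branch_apply zeta k c x)))
     = real b * real b * (\<Sum>c\<in>branches b k. G (pik p k (branch_apply zeta k c x)))"
proof -
  have "{- int (Suc k)..int (Suc k)} = insert (int (Suc k)) (insert (- int (Suc k)) {- int k..int k})"
    by auto
  then have split: "branches b (Suc k) =
      PiE (insert (int (Suc k)) (insert (- int (Suc k)) {- int k..int k})) (\<lambda>_. {..<b})"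
    unfolding branches_def by simp
  have indep: "branch_apply zeta k (g(j := y)) x = branch_apply zeta k g x" if "\<bar>j\<bar> > int k" for g j y
    using that unfolding branch_apply_def by auto
  show ?thesis
    unfolding split
    by (subst sum_PiE_insert_indep, simp_all add: indep,
        subst sum_PiE_insert_indep, simp_all add: indep branches_def)
qed

definition branch_avg :: "nat \<Rightarrow> (nat \<Rightarrow> real \<Rightarrow> real) \<Rightarrow> real \<Rightarrow> (pt \<Rightarrow> real) \<Rightarrow> nat \<Rightarrow> pt \<Rightarrow> real"
  where "branch_avg b zeta p G k x =
    (1 / real b ^ (2 * k + 1)) * (\<Sum>c\<in>branches b k. G (pik p k (branch_apply zeta k c x)))"

lemma Pk_eq_branch_avg: "Pk b zeta p f k \<Phi> x = branch_avg b zeta p (\<lambda>y. exp (f y) * \<Phi> y) k x"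
  unfolding Pk_def branch_avg_def by simp

lemma branch_avg_Suc_diff:
  assumes "0 < b"
  shows "branch_avg b zeta p G (Suc k) x - branch_avg b zeta p G k x =
    (1 / real b ^ (2 * Suc k + 1)) * (\<Sum>c\<in>branches b (Suc k).
        G (pik p (Suc k) (branch_apply zeta (Suc k) c x)) - G (pik p k (branch_apply zeta (Suc k) c x)))"
proof -
  have "branch_avg b zeta p G k x = (1 / real b ^ (2 * Suc k + 1)) *
     (\<Sum>c\<in>branches b (Suc k). G (pik p k (branch_apply zeta k c x)))"
    unfolding branch_avg_def sum_branches_Suc using assms by (simp add: field_simps)
  then show ?thesis
    unfolding branch_avg_def pik_branch_apply_Suc by (simp add: sum_subtractf right_diff_distrib)
qed

definition holder_bounded ::
    "(pt \<Rightarrow> pt \<Rightarrow> real) \<Rightarrow> real \<Rightarrow> real \<Rightarrow> (pt \<Rightarrow> real) \<Rightarrow> real \<Rightarrow> real \<Rightarrow> bool"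
  where "holder_bounded d p \<beta> g M K \<longleftrightarrow> (\<forall>x\<in>Omega. \<bar>g x\<bar> \<le> M) \<and>
     (\<forall>k x y. x \<in> Omega \<longrightarrow> y \<in> Omega \<longrightarrow> \<bar>g (pik p k x) - g (pik p k y)\<bar> \<le> K * d x y powr \<beta>)"

lemma holder_boundedD:
  assumes "holder_bounded d p \<beta> g M K"
  shows "x \<in> Omega \<Longrightarrow> \<bar>g x\<bar> \<le> M"
    and "x \<in> Omega \<Longrightarrow> y \<in> Omega \<Longrightarrow> \<bar>g (pik p k x) - g (pik p k y)\<bar> \<le> K * d x y powr \<beta>"
  using assms unfolding holder_bounded_def by auto

lemma holder_bounded_bound_nonneg: "holder_bounded d p \<beta> g M K \<Longrightarrow> 0 \<le> M"
  using holder_boundedD(1)[OF _ zero_in_Omega] abs_ge_zero order_trans by blast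

lemma abs_le_sup_norm: "x \<in> Omega \<Longrightarrow> ereal \<bar>g x\<bar> \<le> sup_norm g"
  unfolding sup_norm_def by (rule SUP_upper)

lemma sup_norm_nonneg: "0 \<le> sup_norm g"
  by (rule order_trans[OF _ abs_le_sup_norm[OF zero_in_Omega]]) simp

lemma sup_norm_le: "(\<And>x. x \<in> Omega \<Longrightarrow> \<bar>g x\<bar> \<le> M) \<Longrightarrow> sup_norm g \<le> ereal M"
  unfolding sup_norm_def by (rule SUP_least) simp

lemma holder_quotient_le_holder_semi:
  assumes "x \<in> Omega" "y \<in> Omega" "x \<noteq> y"
  shows "ereal (\<bar>g (pik p k x) - g (pik p k y)\<bar> / d x y powr \<beta>) \<le> holder_semi d p \<beta> g"
  unfolding holder_semi_def
  by (rule SUP_upper2[of k], simp, rule SUP_upper2[of "(x, y)"]) (use assms in auto)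

lemma holder_semi_nonneg: "0 \<le> holder_semi d p \<beta> g"
  by (rule order_trans[OF _ holder_quotient_le_holder_semi[OF zero_in_Omega half_in_Omega zero_neq_half]])
    simp

locale seq_space =
  fixes dI :: "real \<Rightarrow> real \<Rightarrow> real" and \<theta> p :: real and d :: "pt \<Rightarrow> pt \<Rightarrow> real"
  assumes d_def: "d = dOm dI \<theta>"
    and dI_metric: "metric_on Iset dI"
    and dI_bdd: "bdd_above {dI s t | s t. s \<in> Iset \<and> t \<in> Iset}"
    and theta: "0 < \<theta>" "\<theta> < 1"
    and p_I: "p \<in> Iset"
begin

definition D where "D = Sup {dI s t | s t. s \<in> Iset \<and> t \<in> Iset}"

lemma dI_nonneg: "s \<in> Iset \<Longrightarrow> t \<in> Iset \<Longrightarrow> 0 \<le> dI s t"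
  and dI_self: "s \<in> Iset \<Longrightarrow> dI s s = 0"
  and dI_sym: "s \<in> Iset \<Longrightarrow> t \<in> Iset \<Longrightarrow> dI s t = dI t s"
  using dI_metric unfolding metric_on_def by auto

lemma dI_pos: "s \<in> Iset \<Longrightarrow> t \<in> Iset \<Longrightarrow> s \<noteq> t \<Longrightarrow> 0 < dI s t"
  using dI_metric unfolding metric_on_def by (metis order_le_less)

lemma dI_le_D: "s \<in> Iset \<Longrightarrow> t \<in> Iset \<Longrightarrow> dI s t \<le> D"
  unfolding D_def by (rule cSup_upper) (use dI_bdd in auto)

lemma D_nonneg: "0 \<le> D"
  using dI_le_D[of 0 0] dI_nonneg[of 0 0] by (simp add: Iset_def)

lemma weighted_coord_le_D:
  assumes "x \<in> Omega" "y \<in> Omega"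
  shows "\<theta> ^ nat \<bar>k\<bar> * dI (x k) (y k) \<le> D"
proof -
  have I: "x k \<in> Iset" "y k \<in> Iset"
    using assms unfolding Omega_def by auto
  have "\<theta> ^ nat \<bar>k\<bar> * dI (x k) (y k) \<le> 1 * dI (x k) (y k)"
    by (intro mult_right_mono power_le_one) (use theta dI_nonneg I in auto)
  also have "\<dots> \<le> D"
    using dI_le_D I by simp
  finally show ?thesis .
qed

lemma weighted_coord_le_d: "x \<in> Omega \<Longrightarrow> y \<in> Omega \<Longrightarrow> \<theta> ^ nat \<bar>k\<bar> * dI (x k) (y k) \<le> d x y"
  unfolding d_def dOm_def
  by (rule cSUP_upper) (auto intro: bdd_aboveI2 weighted_coord_le_D)

lemma d_le: "(\<And>k. \<theta> ^ nat \<bar>k\<bar> * dI (x k) (y k) \<le> B) \<Longrightarrow> d x y \<le> B"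
  unfolding d_def dOm_def by (rule cSUP_least) auto

lemma d_nonneg: "x \<in> Omega \<Longrightarrow> y \<in> Omega \<Longrightarrow> 0 \<le> d x y"
  using weighted_coord_le_d[of x y 0] dI_nonneg[of "x 0" "y 0"] by (simp add: Omega_def)

lemma d_le_D: "x \<in> Omega \<Longrightarrow> y \<in> Omega \<Longrightarrow> d x y \<le> D"
  by (rule d_le) (rule weighted_coord_le_D)

lemma d_pos:
  assumes x: "x \<in> Omega" and y: "y \<in> Omega" and "x \<noteq> y"
  shows "0 < d x y"
proof -
  obtain k where k: "x k \<noteq> y k"
    using \<open>x \<noteq> y\<close> by auto
  have "0 < \<theta> ^ nat \<bar>k\<bar> * dI (x k) (y k)"
    using x y k theta dI_pos by (auto simp: Omega_def)
  then show ?thesis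
    using weighted_coord_le_d[OF x y, of k] by linarith
qed

lemma d_sym: "x \<in> Omega \<Longrightarrow> y \<in> Omega \<Longrightarrow> d x y = d y x"
  unfolding d_def dOm_def Omega_def by (simp add: dI_sym)

lemma d_pik_le: "x \<in> Omega \<Longrightarrow> y \<in> Omega \<Longrightarrow> d (pik p k x) (pik p k y) \<le> d x y"
  by (rule d_le) (auto simp: pik_def dI_self[OF p_I] weighted_coord_le_d d_nonneg)

lemma d_pik_self_le:
  assumes w: "w \<in> Omega"
  shows "d w (pik p k w) \<le> \<theta> ^ Suc k * D"
proof (rule d_le)
  fix j
  show "\<theta> ^ nat \<bar>j\<bar> * dI (w j) (pik p k w j) \<le> \<theta> ^ Suc k * D"
  proof (cases "\<bar>j\<bar> \<le> int k")
    case True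
    then show ?thesis
      using dI_self w theta D_nonneg by (simp add: pik_def Omega_def)
  next
    case False
    have "\<theta> ^ nat \<bar>j\<bar> \<le> \<theta> ^ Suc k"
      by (rule power_decreasing) (use False theta in auto)
    moreover have "0 \<le> dI (w j) p" "dI (w j) p \<le> D"
      using w p_I dI_nonneg dI_le_D by (auto simp: Omega_def)
    ultimately show ?thesis
      using False theta by (simp add: pik_def mult_mono)
  qed
qed

lemma holder_bounded_const_nonneg:
  assumes "holder_bounded d p \<beta> g M K"
  shows "0 \<le> K"
proof -
  let ?y = "\<lambda>_::int. 1 / 2 :: real"
  have "0 < d (\<lambda>_. 0) ?y powr \<beta>"
    using d_pos[OF zero_in_Omega half_in_Omega zero_neq_half] by simp
  moreover have "0 \<le> K * d (\<lambda>_. 0) ?y powr \<beta>"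
    using holder_boundedD(2)[OF assms zero_in_Omega half_in_Omega, of 0] abs_ge_zero order_trans
    by blast
  ultimately show ?thesis
    by (simp add: zero_le_mult_iff)
qed

lemma holder_bounded_truncated:
  assumes "holder_bounded d p \<beta> g M K" "x \<in> Omega" "y \<in> Omega"
  shows "\<bar>g (pik p k x) - g (pik p k y)\<bar> \<le> K * d (pik p k x) (pik p k y) powr \<beta>"
  using holder_boundedD(2)[OF assms(1), where x = "pik p k x" and y = "pik p k y" and k = k]
    pik_in_Omega[OF p_I] assms(2,3) by simp

lemma holder_bounded_mult:
  assumes g1: "holder_bounded d p \<beta> g1 M1 K1" and g2: "holder_bounded d p \<beta> g2 M2 K2"
  shows "holder_bounded d p \<beta> (\<lambda>x. g1 x * g2 x) (M1 * M2) (M1 * K2 + M2 * K1)"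
  unfolding holder_bounded_def
proof (intro conjI ballI allI impI)
  have M: "0 \<le> M1" "0 \<le> M2"
    using g1 g2 by (auto intro: holder_bounded_bound_nonneg)
  fix x assume x: "x \<in> Omega"
  show "\<bar>g1 x * g2 x\<bar> \<le> M1 * M2"
    unfolding abs_mult using M by (intro mult_mono holder_boundedD(1)[OF g1 x] holder_boundedD(1)[OF g2 x]) auto
next
  have M: "0 \<le> M1" "0 \<le> M2"
    using g1 g2 by (auto intro: holder_bounded_bound_nonneg)
  fix k x y assume x: "x \<in> Omega" and y: "y \<in> Omega"
  let ?a = "pik p k x" and ?b = "pik p k y"
  have a: "?a \<in> Omega" and b: "?b \<in> Omega"
    using pik_in_Omega p_I x y by auto
  have "\<bar>g1 ?a * g2 ?a - g1 ?b * g2 ?b\<bar> = \<bar>g1 ?a * (g2 ?a - g2 ?b) + g2 ?b * (g1 ?a - g1 ?b)\<bar>"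
    by (simp add: algebra_simps)
  also have "\<dots> \<le> \<bar>g1 ?a\<bar> * \<bar>g2 ?a - g2 ?b\<bar> + \<bar>g2 ?b\<bar> * \<bar>g1 ?a - g1 ?b\<bar>"
    by (metis abs_mult abs_triangle_ineq)
  also have "\<dots> \<le> M1 * (K2 * d x y powr \<beta>) + M2 * (K1 * d x y powr \<beta>)"
    using M by (intro add_mono mult_mono holder_boundedD[OF g1] holder_boundedD[OF g2] a b x y) auto
  finally show "\<bar>g1 ?a * g2 ?a - g1 ?b * g2 ?b\<bar> \<le> (M1 * K2 + M2 * K1) * d x y powr \<beta>"
    by (simp add: algebra_simps)
qed

lemma holder_bounded_exp:
  assumes g: "holder_bounded d p \<beta> g M K"
  shows "holder_bounded d p \<beta> (\<lambda>x. exp (g x)) (exp M) (exp M * K)"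
  unfolding holder_bounded_def
proof (intro conjI ballI allI impI)
  fix x assume "x \<in> Omega"
  then have "g x \<le> M"
    using holder_boundedD(1)[OF g] abs_le_D1 by blast
  then show "\<bar>exp (g x)\<bar> \<le> exp M"
    by simp
next
  fix k x y assume x: "x \<in> Omega" and y: "y \<in> Omega"
  let ?a = "pik p k x" and ?b = "pik p k y"
  have "?a \<in> Omega" "?b \<in> Omega"
    using pik_in_Omega p_I x y by auto
  then have "\<bar>exp (g ?a) - exp (g ?b)\<bar> \<le> exp M * \<bar>g ?a - g ?b\<bar>"
    using holder_boundedD(1)[OF g] abs_le_D1 by (intro abs_exp_diff_le) blast+
  also have "\<dots> \<le> exp M * (K * d x y powr \<beta>)"
    by (intro mult_left_mono holder_boundedD(2)[OF g x y]) auto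
  finally show "\<bar>exp (g ?a) - exp (g ?b)\<bar> \<le> exp M * K * d x y powr \<beta>"
    by simp
qed

lemma holder_semi_le:
  assumes "\<And>k x y. x \<in> Omega \<Longrightarrow> y \<in> Omega \<Longrightarrow> \<bar>g (pik p k x) - g (pik p k y)\<bar> \<le> K * d x y powr \<beta>"
  shows "holder_semi d p \<beta> g \<le> ereal K"
  unfolding holder_semi_def
proof (intro SUP_least)
  fix k xy assume "xy \<in> {(x, y). x \<in> Omega \<and> y \<in> Omega \<and> x \<noteq> y}"
  then obtain x y where xy: "xy = (x, y)" and x: "x \<in> Omega" and y: "y \<in> Omega" and "x \<noteq> y"
    by auto
  then have "0 < d x y powr \<beta>"
    using d_pos[OF x y] by simp
  then show "ereal (\<bar>g (pik p k (fst xy)) - g (pik p k (snd xy))\<bar> / d (fst xy) (snd xy) powr \<beta>)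
      \<le> ereal K"
    using assms[OF x y, of k] xy by (simp add: pos_divide_le_eq)
qed

lemma Cspace_norms_finite:
  assumes "g \<in> Cspace d p \<beta>"
  shows "sup_norm g = ereal (real_of_ereal (sup_norm g))"
    and "holder_semi d p \<beta> g = ereal (real_of_ereal (holder_semi d p \<beta> g))"
proof -
  have "sup_norm g + holder_semi d p \<beta> g < \<infinity>"
    using assms unfolding Cspace_def by auto
  then have "sup_norm g \<noteq> \<infinity>" "holder_semi d p \<beta> g \<noteq> \<infinity>"
    using sup_norm_nonneg holder_semi_nonneg by auto
  then show "sup_norm g = ereal (real_of_ereal (sup_norm g))"
    and "holder_semi d p \<beta> g = ereal (real_of_ereal (holder_semi d p \<beta> g))"
    using sup_norm_nonneg[of g] holder_semi_nonneg[of d p \<beta> g] by (auto simp: ereal_real)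
qed

lemma Cspace_holder_bounded:
  assumes "g \<in> Cspace d p \<beta>"
  shows "holder_bounded d p \<beta> g (real_of_ereal (sup_norm g)) (real_of_ereal (holder_semi d p \<beta> g))"
  unfolding holder_bounded_def
proof (intro conjI ballI allI impI)
  fix x assume "x \<in> Omega"
  then show "\<bar>g x\<bar> \<le> real_of_ereal (sup_norm g)"
    using abs_le_sup_norm Cspace_norms_finite(1)[OF assms] by (metis ereal_less_eq(3))
next
  fix k x y assume x: "x \<in> Omega" and y: "y \<in> Omega"
  show "\<bar>g (pik p k x) - g (pik p k y)\<bar> \<le> real_of_ereal (holder_semi d p \<beta> g) * d x y powr \<beta>"
  proof (cases "x = y")
    case True
    then show ?thesis
      using holder_semi_nonneg by (simp add: real_of_ereal_pos)
  next
    case False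
    then have "\<bar>g (pik p k x) - g (pik p k y)\<bar> / d x y powr \<beta> \<le> real_of_ereal (holder_semi d p \<beta> g)"
      using holder_quotient_le_holder_semi[OF x y] Cspace_norms_finite(2)[OF assms]
      by (metis ereal_less_eq(3))
    moreover have "0 < d x y powr \<beta>"
      using d_pos[OF x y False] by simp
    ultimately show ?thesis
      by (simp add: pos_divide_le_eq)
  qed
qed

lemma cont_d_if_holder:
  assumes \<beta>: "0 < \<beta>" and K: "0 \<le> K"
    and hol: "\<And>x y. x \<in> Omega \<Longrightarrow> y \<in> Omega \<Longrightarrow> \<bar>g x - g y\<bar> \<le> K * d x y powr \<beta>"
  shows "cont_d d g"
  unfolding cont_d_def
proof (intro ballI allI impI)
  fix x \<epsilon> assume x: "x \<in> Omega" and \<epsilon>: "(0::real) < \<epsilon>"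
  define \<delta> where "\<delta> = (\<epsilon> / (K + 1)) powr (1 / \<beta>)"
  have \<delta>: "0 < \<delta>" "\<delta> powr \<beta> = \<epsilon> / (K + 1)"
    unfolding \<delta>_def using \<epsilon> K \<beta> by (simp_all add: powr_powr)
  show "\<exists>\<delta>>0. \<forall>y\<in>Omega. d x y < \<delta> \<longrightarrow> \<bar>g y - g x\<bar> < \<epsilon>"
  proof (intro exI conjI ballI impI)
    fix y assume y: "y \<in> Omega" and "d x y < \<delta>"
    then have "d x y powr \<beta> \<le> \<epsilon> / (K + 1)"
      using \<delta> \<beta> d_nonneg[OF x y] by (metis less_imp_le powr_mono2)
    then have "\<bar>g x - g y\<bar> \<le> K * (\<epsilon> / (K + 1))"
      using hol[OF x y] K by (meson mult_left_mono order_trans)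
    also have "\<dots> < \<epsilon>"
      using \<epsilon> K by (simp add: field_simps)
    finally show "\<bar>g y - g x\<bar> < \<epsilon>"
      by (simp add: abs_minus_commute)
  qed (rule \<delta>(1))
qed

lemma Cspace_if_holder_bounded:
  assumes "cont_d d g" "holder_bounded d p \<beta> g M K"
  shows "g \<in> Cspace d p \<beta>"
proof -
  have "sup_norm g \<le> ereal M"
    by (rule sup_norm_le) (rule holder_boundedD(1)[OF assms(2)])
  moreover have "holder_semi d p \<beta> g \<le> ereal K"
    by (rule holder_semi_le) (rule holder_boundedD(2)[OF assms(2)])
  ultimately have "sup_norm g + holder_semi d p \<beta> g \<le> ereal M + ereal K"
    by (rule add_mono)
  then show ?thesis
    unfolding Cspace_def using assms(1) by (auto simp: order_le_less_trans)
qed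

end

locale branch_system = seq_space +
  fixes b :: nat and zeta :: "nat \<Rightarrow> real \<Rightarrow> real" and \<eta> \<beta> :: real
  assumes b_pos: "0 < b"
    and zeta_I: "\<forall>j<b. \<forall>t\<in>Iset. zeta j t \<in> Iset"
    and eta: "0 < \<eta>" "\<eta> < 1"
    and contract: "\<forall>j<b. \<forall>s\<in>Iset. \<forall>t\<in>Iset. dI (zeta j s) (zeta j t) \<le> \<eta> * dI s t"
    and beta: "0 < \<beta>" "\<beta> \<le> 1"
begin

lemma branch_point_in_Omega:
  "u \<in> Omega \<Longrightarrow> c \<in> branches b k \<Longrightarrow> pik p k (branch_apply zeta k c u) \<in> Omega"
  using pik_in_Omega[OF p_I] branch_apply_in_Omega[OF zeta_I] by blast

lemma d_branch_contract:
  assumes x: "x \<in> Omega" and y: "y \<in> Omega" and c: "c \<in> branches b k"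
  shows "d (pik p k (branch_apply zeta k c x)) (pik p k (branch_apply zeta k c y)) \<le> \<eta> * d x y"
proof (rule d_le)
  fix j
  show "\<theta> ^ nat \<bar>j\<bar> * dI (pik p k (branch_apply zeta k c x) j) (pik p k (branch_apply zeta k c y) j)
      \<le> \<eta> * d x y"
  proof (cases "\<bar>j\<bar> \<le> int k")
    case True
    have I: "x j \<in> Iset" "y j \<in> Iset"
      using x y by (auto simp: Omega_def)
    have "\<theta> ^ nat \<bar>j\<bar> * dI (zeta (c j) (x j)) (zeta (c j) (y j)) \<le> \<theta> ^ nat \<bar>j\<bar> * (\<eta> * dI (x j) (y j))"
      using contract branches_less[OF c True] I theta by (intro mult_left_mono) auto
    also have "\<dots> = \<eta> * (\<theta> ^ nat \<bar>j\<bar> * dI (x j) (y j))"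
      by simp
    also have "\<dots> \<le> \<eta> * d x y"
      using weighted_coord_le_d[OF x y] eta by (intro mult_left_mono) auto
    finally show ?thesis
      using True by (simp add: pik_def branch_apply_def)
  next
    case False
    then show ?thesis
      using d_nonneg[OF x y] dI_self[OF p_I] eta by (simp add: pik_def)
  qed
qed

lemma d_powr_branch_contract:
  assumes "x \<in> Omega" "y \<in> Omega" "c \<in> branches b k"
  shows "d (pik p k (branch_apply zeta k c x)) (pik p k (branch_apply zeta k c y)) powr \<beta>
      \<le> \<eta> powr \<beta> * d x y powr \<beta>"
proof -
  have "d (pik p k (branch_apply zeta k c x)) (pik p k (branch_apply zeta k c y)) powr \<beta>
      \<le> (\<eta> * d x y) powr \<beta>"
    using assms d_branch_contract d_nonneg branch_point_in_Omega beta by (intro powr_mono2) auto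
  then show ?thesis
    using eta d_nonneg[OF assms(1,2)] by (simp add: powr_mult)
qed

text \<open>Truncating one more coordinate moves every branch point by at most \<open>\<theta>\<^sup>k\<^sup>+\<^sup>1 D\<close>, so the
  averages form a Cauchy sequence with geometric increments.\<close>
lemma branch_avg_convergent:
  assumes G: "holder_bounded d p \<beta> G M K" and x: "x \<in> Omega"
  shows "convergent (\<lambda>k. branch_avg b zeta p G k x)"
proof (rule convergent_if_increments_le_geometric)
  show "0 \<le> \<theta> powr \<beta>" "\<theta> powr \<beta> < 1"
    using powr_less_mono2[of \<beta> \<theta> 1] theta beta by simp_all
  fix k
  let ?B = "K * (D powr \<beta> * \<theta> powr \<beta>) * (\<theta> powr \<beta>) ^ k"
  have K: "0 \<le> K"
    by (rule holder_bounded_const_nonneg[OF G])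
  have "(\<theta> ^ Suc k * D) powr \<beta> = D powr \<beta> * \<theta> powr \<beta> * (\<theta> powr \<beta>) ^ k"
    using theta by (simp add: powr_mult powr_realpow[symmetric] powr_powr powr_power mult.commute)
  then have increment: "\<bar>G (pik p (Suc k) w) - G (pik p k w)\<bar> \<le> ?B" if w: "w \<in> Omega" for w
  proof -
    have "\<bar>G (pik p (Suc k) w) - G (pik p (Suc k) (pik p k w))\<bar> \<le> K * d w (pik p k w) powr \<beta>"
      by (rule holder_boundedD(2)[OF G w pik_in_Omega[OF p_I w]])
    also have "\<dots> \<le> K * (\<theta> ^ Suc k * D) powr \<beta>"
      using d_pik_self_le[OF w] d_nonneg[OF w pik_in_Omega[OF p_I w]] beta K
      by (intro mult_left_mono powr_mono2) auto
    finally show ?thesis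
      using \<open>(\<theta> ^ Suc k * D) powr \<beta> = _\<close> by (simp add: pik_Suc_pik mult.assoc)
  qed
  have "\<bar>branch_avg b zeta p G (Suc k) x - branch_avg b zeta p G k x\<bar>
     \<le> (1 / real b ^ (2 * Suc k + 1)) * (real (card (branches b (Suc k))) * ?B)"
    unfolding branch_avg_Suc_diff[OF b_pos] abs_mult abs_divide abs_one power_abs abs_of_nat
    using branch_apply_in_Omega[OF zeta_I _ x]
    by (intro mult_left_mono order_trans[OF sum_abs] sum_bounded_above increment) auto
  also have "\<dots> = ?B"
    using b_pos by (simp add: card_branches)
  finally show "\<bar>branch_avg b zeta p G (Suc k) x - branch_avg b zeta p G k x\<bar>
      \<le> K * (D powr \<beta> * \<theta> powr \<beta>) * (\<theta> powr \<beta>) ^ k" .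
qed

end

locale transfer_setting = branch_system +
  fixes f h :: "pt \<Rightarrow> real" and lam Mf Hf Mh Hh :: real
  assumes f_holder: "holder_bounded d p \<beta> f Mf Hf"
    and h_holder: "holder_bounded d p \<beta> h Mh Hh"
    and h_pos: "\<forall>x\<in>Omega. 0 < h x"
    and h_eig: "\<forall>x\<in>Omega. Pop b zeta p f h x = lam * h x"
    and h_bound: "\<forall>x\<in>Omega. \<forall>y\<in>Omega.
        h x \<le> exp (Hf * (\<eta> powr \<beta> / (1 - \<eta> powr \<beta>)) * d x y powr \<beta>) * h y"
begin

definition "Kh = Hf * (\<eta> powr \<beta> / (1 - \<eta> powr \<beta>))"

text \<open>\<open>Kw\<close> bounds the \<open>\<beta>\<close>-Hoelder constant of \<open>log (e\<^sup>f h)\<close> along inverse branches, \<open>C6\<close> is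
  the constant of the statement.\<close>
definition "Kw = (Hf + Kh) * \<eta> powr \<beta>"

definition "C6 = 4 * Kw * exp (2 * Kw * D powr \<beta>)"

lemma Kh_nonneg: "0 \<le> Kh"
proof -
  have "\<eta> powr \<beta> < 1"
    using powr_less_mono2[of \<beta> \<eta> 1] eta beta by simp
  then show ?thesis
    unfolding Kh_def using holder_bounded_const_nonneg[OF f_holder] by simp
qed

lemma Kw_nonneg: "0 \<le> Kw"
  unfolding Kw_def using Kh_nonneg holder_bounded_const_nonneg[OF f_holder] by simp

lemma C6_nonneg: "0 \<le> C6"
  unfolding C6_def using Kw_nonneg by simp

definition weight :: "nat \<Rightarrow> pt \<Rightarrow> (int \<Rightarrow> nat) \<Rightarrow> real" where
  "weight k u c = exp (f (pik p k (branch_apply zeta k c u))) * h (pik p k (branch_apply zeta k c u))"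

lemma weight_pos: "u \<in> Omega \<Longrightarrow> c \<in> branches b k \<Longrightarrow> 0 < weight k u c"
  unfolding weight_def using branch_point_in_Omega h_pos by auto

lemma weight_le:
  assumes u: "u \<in> Omega" and v: "v \<in> Omega" and c: "c \<in> branches b k"
  shows "weight k u c \<le> exp (Kw * d u v powr \<beta>) * weight k v c"
proof -
  let ?a = "pik p k (branch_apply zeta k c u)" and ?b = "pik p k (branch_apply zeta k c v)"
  let ?r = "\<eta> powr \<beta> * d u v powr \<beta>"
  have a: "?a \<in> Omega" and b: "?b \<in> Omega"
    using branch_point_in_Omega u v c by auto
  have dab: "d ?a ?b powr \<beta> \<le> ?r"
    by (rule d_powr_branch_contract[OF u v c])
  have "f ?a - f ?b \<le> Hf * d ?a ?b powr \<beta>"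
    using holder_bounded_truncated[OF f_holder branch_apply_in_Omega[OF zeta_I c u]
        branch_apply_in_Omega[OF zeta_I c v]] abs_le_D1 by blast
  also have "\<dots> \<le> Hf * ?r"
    by (intro mult_left_mono dab holder_bounded_const_nonneg[OF f_holder])
  finally have "exp (f ?a) \<le> exp (Hf * ?r) * exp (f ?b)"
    by (simp flip: exp_add)
  moreover have "h ?a \<le> exp (Kh * ?r) * h ?b"
  proof -
    have "h ?a \<le> exp (Kh * d ?a ?b powr \<beta>) * h ?b"
      using h_bound a b unfolding Kh_def by blast
    also have "\<dots> \<le> exp (Kh * ?r) * h ?b"
      using h_pos b mult_left_mono[OF dab Kh_nonneg] by (intro mult_right_mono) auto
    finally show ?thesis .
  qed
  ultimately have "weight k u c \<le> (exp (Hf * ?r) * exp (f ?b)) * (exp (Kh * ?r) * h ?b)"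
    unfolding weight_def using h_pos a by (intro mult_mono) auto
  also have "\<dots> = exp (Kw * d u v powr \<beta>) * weight k v c"
    unfolding weight_def Kw_def by (simp add: exp_add[symmetric] algebra_simps)
  finally show ?thesis .
qed

lemma Pk_tendsto_Pop:
  assumes g: "holder_bounded d p \<beta> g M K" and u: "u \<in> Omega"
  shows "(\<lambda>k. Pk b zeta p f k g u) \<longlonglongrightarrow> Pop b zeta p f g u"
proof -
  have "convergent (\<lambda>k. Pk b zeta p f k g u)"
    unfolding Pk_eq_branch_avg
    by (rule branch_avg_convergent[OF holder_bounded_mult[OF holder_bounded_exp[OF f_holder] g] u])
  then show ?thesis
    unfolding Pop_def by (simp add: convergent_LIMSEQ_iff)
qed

lemma Pk_h_lower_bound:
  assumes u: "u \<in> Omega"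
  shows "exp (- Mf) * exp (- Kh * D powr \<beta>) * h u \<le> Pk b zeta p f k h u"
proof -
  let ?m = "exp (- Mf) * exp (- Kh * D powr \<beta>) * h u"
  have lower: "?m \<le> weight k u c" if c: "c \<in> branches b k" for c
  proof -
    let ?a = "pik p k (branch_apply zeta k c u)"
    have a: "?a \<in> Omega"
      using branch_point_in_Omega u c by auto
    have "- Mf \<le> f ?a"
      using holder_boundedD(1)[OF f_holder a] by linarith
    moreover have "exp (- Kh * D powr \<beta>) * h u \<le> h ?a"
    proof -
      have "Kh * d u ?a powr \<beta> \<le> Kh * D powr \<beta>"
        using Kh_nonneg d_le_D[OF u a] d_nonneg[OF u a] beta
        by (intro mult_left_mono powr_mono2) auto
      then have "h u \<le> exp (Kh * D powr \<beta>) * h ?a"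
        using h_bound u a h_pos unfolding Kh_def
        by (meson exp_le_cancel_iff less_imp_le mult_right_mono order_trans)
      then show ?thesis
        by (simp add: exp_minus field_simps)
    qed
    ultimately show ?thesis
      unfolding weight_def mult.assoc using h_pos u by (intro mult_mono) auto
  qed
  have "?m = (1 / real b ^ (2 * k + 1)) * (\<Sum>c\<in>branches b k. ?m)"
    using b_pos by (simp add: card_branches)
  also have "\<dots> \<le> (1 / real b ^ (2 * k + 1)) * (\<Sum>c\<in>branches b k. weight k u c)"
    by (intro mult_left_mono sum_mono lower) auto
  also have "\<dots> = Pk b zeta p f k h u"
    unfolding Pk_def weight_def ..
  finally show ?thesis .
qed

text \<open>Converges to \<open>L\<Phi>\<close> because \<open>P h = \<lambda> h\<close>.\<close>
definition Lk :: "(pt \<Rightarrow> real) \<Rightarrow> nat \<Rightarrow> pt \<Rightarrow> real" where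
  "Lk \<Phi> k u = Pk b zeta p f k (\<lambda>y. h y * \<Phi> y) u / Pk b zeta p f k h u"

lemma Lk_eq_weighted_average:
  "Lk \<Phi> k u = (\<Sum>c\<in>branches b k. weight k u c * \<Phi> (pik p k (branch_apply zeta k c u)))
                 / (\<Sum>c\<in>branches b k. weight k u c)"
proof -
  have "Pk b zeta p f k (\<lambda>y. h y * \<Phi> y) u = (1 / real b ^ (2 * k + 1)) *
          (\<Sum>c\<in>branches b k. weight k u c * \<Phi> (pik p k (branch_apply zeta k c u)))"
    unfolding Pk_def weight_def by (simp add: mult.assoc)
  moreover have "Pk b zeta p f k h u = (1 / real b ^ (2 * k + 1)) * (\<Sum>c\<in>branches b k. weight k u c)"
    unfolding Pk_def weight_def ..
  ultimately show ?thesis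
    unfolding Lk_def using b_pos by (simp only: mult_divide_mult_cancel_left_if) simp
qed

lemma Lk_tendsto_Lop:
  assumes \<Phi>: "holder_bounded d p \<beta> \<Phi> S H" and u: "u \<in> Omega"
  shows "(\<lambda>k. Lk \<Phi> k u) \<longlonglongrightarrow> Lop b zeta p f h lam \<Phi> u"
proof -
  have num: "(\<lambda>k. Pk b zeta p f k (\<lambda>y. h y * \<Phi> y) u) \<longlonglongrightarrow> Pop b zeta p f (\<lambda>y. h y * \<Phi> y) u"
    by (rule Pk_tendsto_Pop[OF holder_bounded_mult[OF h_holder \<Phi>] u])
  have den: "(\<lambda>k. Pk b zeta p f k h u) \<longlonglongrightarrow> lam * h u"
    using Pk_tendsto_Pop[OF h_holder u] h_eig u by simp
  have "exp (- Mf) * exp (- Kh * D powr \<beta>) * h u \<le> lam * h u"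
    by (rule LIMSEQ_le_const[OF den]) (use Pk_h_lower_bound[OF u] in auto)
  moreover have "0 < exp (- Mf) * exp (- Kh * D powr \<beta>) * h u"
    using h_pos u by simp
  ultimately have "lam * h u \<noteq> 0"
    by linarith
  from tendsto_divide[OF num den this] show ?thesis
    unfolding Lk_def Lop_def .
qed

lemma abs_Lk_le:
  assumes "holder_bounded d p \<beta> \<Phi> S H" "u \<in> Omega"
  shows "\<bar>Lk \<Phi> k u\<bar> \<le> S"
  unfolding Lk_eq_weighted_average
  by (rule abs_weighted_average_le)
    (use assms finite_branches branches_nonempty b_pos weight_pos branch_point_in_Omega
      holder_boundedD(1) in auto)

lemma Lk_holder:
  assumes \<Phi>: "holder_bounded d p \<beta> \<Phi> S H" and u: "u \<in> Omega" and v: "v \<in> Omega"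
  shows "\<bar>Lk \<Phi> k u - Lk \<Phi> k v\<bar> \<le> (H * \<eta> powr \<beta> + S * C6) * d u v powr \<beta>"
proof -
  define r where "r = Kw * d u v powr \<beta>"
  have r: "0 \<le> r"
    unfolding r_def using Kw_nonneg by simp
  have value_diff: "\<bar>\<Phi> (pik p k (branch_apply zeta k c u)) - \<Phi> (pik p k (branch_apply zeta k c v))\<bar>
      \<le> H * (\<eta> powr \<beta> * d u v powr \<beta>)" if c: "c \<in> branches b k" for c
    using holder_bounded_truncated[OF \<Phi> branch_apply_in_Omega[OF zeta_I c u]
        branch_apply_in_Omega[OF zeta_I c v], of k]
      mult_left_mono[OF d_powr_branch_contract[OF u v c] holder_bounded_const_nonneg[OF \<Phi>]]
    by linarith
  have weights: "2 * (exp (2 * r) - 1) \<le> C6 * d u v powr \<beta>"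
  proof -
    have "d u v powr \<beta> \<le> D powr \<beta>"
      using d_le_D[OF u v] d_nonneg[OF u v] beta by (intro powr_mono2) auto
    then have "2 * r \<le> 2 * Kw * D powr \<beta>"
      unfolding r_def using Kw_nonneg by (simp add: mult_left_mono)
    have "exp (2 * r) - 1 \<le> 2 * r * exp (2 * r)"
      by (rule exp_minus_one_le)
    also have "\<dots> \<le> 2 * r * exp (2 * Kw * D powr \<beta>)"
      using r \<open>2 * r \<le> 2 * Kw * D powr \<beta>\<close> by (intro mult_left_mono) auto
    finally show ?thesis
      unfolding C6_def r_def by (simp add: algebra_simps)
  qed
  have "\<bar>Lk \<Phi> k u - Lk \<Phi> k v\<bar> \<le> H * (\<eta> powr \<beta> * d u v powr \<beta>) + S * (2 * (exp (2 * r) - 1))"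
    unfolding Lk_eq_weighted_average r_def
    by (rule abs_weighted_averages_diff_le)
      (use finite_branches branches_nonempty b_pos weight_pos u v weight_le[OF u v] weight_le[OF v u]
        d_sym[OF v u] value_diff holder_boundedD(1)[OF \<Phi>] branch_point_in_Omega Kw_nonneg in auto)
  also have "\<dots> \<le> H * (\<eta> powr \<beta> * d u v powr \<beta>) + S * (C6 * d u v powr \<beta>)"
    using mult_left_mono[OF weights holder_bounded_bound_nonneg[OF \<Phi>]] by simp
  finally show ?thesis
    by (simp add: algebra_simps)
qed

lemma abs_Lop_le:
  assumes \<Phi>: "holder_bounded d p \<beta> \<Phi> S H" and u: "u \<in> Omega"
  shows "\<bar>Lop b zeta p f h lam \<Phi> u\<bar> \<le> S"
  by (rule LIMSEQ_le_const2[OF tendsto_rabs[OF Lk_tendsto_Lop[OF \<Phi> u]]])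
    (use abs_Lk_le[OF \<Phi> u] in auto)

lemma Lop_holder:
  assumes \<Phi>: "holder_bounded d p \<beta> \<Phi> S H" and u: "u \<in> Omega" and v: "v \<in> Omega"
  shows "\<bar>Lop b zeta p f h lam \<Phi> u - Lop b zeta p f h lam \<Phi> v\<bar>
      \<le> (H * \<eta> powr \<beta> + S * C6) * d u v powr \<beta>"
  by (rule LIMSEQ_le_const2[OF tendsto_rabs[OF tendsto_diff[OF Lk_tendsto_Lop[OF \<Phi> u]
        Lk_tendsto_Lop[OF \<Phi> v]]]])
    (use Lk_holder[OF \<Phi> u v] in auto)

end

locale coupled_setting = transfer_setting +
  fixes E :: "pt \<Rightarrow> pt" and C_E :: real
  assumes E_bij: "bij_betw E Omega Omega"
    and C_E: "0 < C_E" "C_E * \<eta> < 1"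
    and E_inv_lip: "\<forall>x\<in>Omega. \<forall>y\<in>Omega. d (inv_into Omega E x) (inv_into Omega E y) \<le> C_E * d x y"
begin

abbreviation "\<L> \<equiv> Lcal b zeta p f h lam E"

lemma inv_E_in_Omega: "x \<in> Omega \<Longrightarrow> inv_into Omega E x \<in> Omega"
  by (rule bij_betw_apply[OF bij_betw_inv_into[OF E_bij]])

lemma abs_Lcal_le: "holder_bounded d p \<beta> \<Phi> S H \<Longrightarrow> x \<in> Omega \<Longrightarrow> \<bar>\<L> \<Phi> x\<bar> \<le> S"
  unfolding Lcal_def by (rule abs_Lop_le[OF _ inv_E_in_Omega])

lemma Lcal_holder:
  assumes \<Phi>: "holder_bounded d p \<beta> \<Phi> S H" and x: "x \<in> Omega" and y: "y \<in> Omega"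
  shows "\<bar>\<L> \<Phi> x - \<L> \<Phi> y\<bar>
      \<le> ((C_E * \<eta>) powr \<beta> * H + C6 * C_E powr \<beta> * S) * d x y powr \<beta>"
proof -
  let ?K = "H * \<eta> powr \<beta> + S * C6"
  have K: "0 \<le> ?K"
    using holder_bounded_const_nonneg[OF \<Phi>] holder_bounded_bound_nonneg[OF \<Phi>] C6_nonneg by simp
  have "\<bar>\<L> \<Phi> x - \<L> \<Phi> y\<bar> \<le> ?K * d (inv_into Omega E x) (inv_into Omega E y) powr \<beta>"
    unfolding Lcal_def by (rule Lop_holder[OF \<Phi> inv_E_in_Omega[OF x] inv_E_in_Omega[OF y]])
  also have "\<dots> \<le> ?K * (C_E * d x y) powr \<beta>"
    using E_inv_lip x y d_nonneg[OF inv_E_in_Omega[OF x] inv_E_in_Omega[OF y]] beta K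
    by (intro mult_left_mono powr_mono2) auto
  also have "\<dots> = ((C_E * \<eta>) powr \<beta> * H + C6 * C_E powr \<beta> * S) * d x y powr \<beta>"
    using C_E eta d_nonneg[OF x y] by (simp add: powr_mult algebra_simps)
  finally show ?thesis .
qed

lemma Lcal_holder_bounded:
  assumes \<Phi>: "holder_bounded d p \<beta> \<Phi> S H"
  shows "holder_bounded d p \<beta> (\<L> \<Phi>) S ((C_E * \<eta>) powr \<beta> * H + C6 * C_E powr \<beta> * S)"
  unfolding holder_bounded_def
proof (intro conjI ballI allI impI)
  let ?K = "(C_E * \<eta>) powr \<beta> * H + C6 * C_E powr \<beta> * S"
  have K: "0 \<le> ?K"
    using holder_bounded_const_nonneg[OF \<Phi>] holder_bounded_bound_nonneg[OF \<Phi>] C6_nonneg by simp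
  fix k x y assume x: "x \<in> Omega" and y: "y \<in> Omega"
  have "\<bar>\<L> \<Phi> (pik p k x) - \<L> \<Phi> (pik p k y)\<bar> \<le> ?K * d (pik p k x) (pik p k y) powr \<beta>"
    by (rule Lcal_holder[OF \<Phi> pik_in_Omega[OF p_I x] pik_in_Omega[OF p_I y]])
  also have "\<dots> \<le> ?K * d x y powr \<beta>"
    using d_pik_le[OF x y] d_nonneg pik_in_Omega[OF p_I] x y beta K
    by (intro mult_left_mono powr_mono2) auto
  finally show "\<bar>\<L> \<Phi> (pik p k x) - \<L> \<Phi> (pik p k y)\<bar> \<le> ?K * d x y powr \<beta>" .
qed (rule abs_Lcal_le[OF \<Phi>])

lemma Lcal_in_Cspace:
  assumes "\<Phi> \<in> Cspace d p \<beta>"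
  shows "\<L> \<Phi> \<in> Cspace d p \<beta>"
proof -
  have \<Phi>: "holder_bounded d p \<beta> \<Phi> (real_of_ereal (sup_norm \<Phi>)) (real_of_ereal (holder_semi d p \<beta> \<Phi>))"
    by (rule Cspace_holder_bounded[OF assms])
  note L = Lcal_holder_bounded[OF \<Phi>]
  show ?thesis
    by (rule Cspace_if_holder_bounded[OF cont_d_if_holder[OF beta(1)] L])
      (use Lcal_holder[OF \<Phi>] holder_bounded_const_nonneg[OF L] in auto)
qed

lemma Lcal_norms_le:
  assumes "\<Psi> \<in> Cspace d p \<beta>"
  defines "S \<equiv> real_of_ereal (sup_norm \<Psi>)" and "H \<equiv> real_of_ereal (holder_semi d p \<beta> \<Psi>)"
  shows "real_of_ereal (sup_norm (\<L> \<Psi>)) \<le> S"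
    and "real_of_ereal (holder_semi d p \<beta> (\<L> \<Psi>)) \<le> (C_E * \<eta>) powr \<beta> * H + C6 * C_E powr \<beta> * S"
proof -
  note L = Lcal_holder_bounded[OF Cspace_holder_bounded[OF assms(1)], folded S_def H_def]
  note finite = Cspace_norms_finite[OF Lcal_in_Cspace[OF assms(1)]]
  show "real_of_ereal (sup_norm (\<L> \<Psi>)) \<le> S"
  proof -
    have "sup_norm (\<L> \<Psi>) \<le> ereal S"
      by (rule sup_norm_le) (rule holder_boundedD(1)[OF L])
    then show ?thesis
      by (subst (asm) finite(1)) simp
  qed
  show "real_of_ereal (holder_semi d p \<beta> (\<L> \<Psi>)) \<le> (C_E * \<eta>) powr \<beta> * H + C6 * C_E powr \<beta> * S"
  proof -
    have "holder_semi d p \<beta> (\<L> \<Psi>) \<le> ereal ((C_E * \<eta>) powr \<beta> * H + C6 * C_E powr \<beta> * S)"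
      by (rule holder_semi_le) (rule holder_boundedD(2)[OF L])
    then show ?thesis
      by (subst (asm) finite(2)) simp
  qed
qed

lemma Lcal_iterate:
  assumes "\<Phi> \<in> Cspace d p \<beta>"
  shows "(\<L> ^^ n) \<Phi> \<in> Cspace d p \<beta> \<and>
    real_of_ereal (sup_norm ((\<L> ^^ n) \<Phi>)) \<le> real_of_ereal (sup_norm \<Phi>)"
proof (induction n)
  case (Suc n)
  then have "(\<L> ^^ n) \<Phi> \<in> Cspace d p \<beta>"
    by simp
  from Lcal_in_Cspace[OF this] Lcal_norms_le(1)[OF this] Suc show ?case
    by simp
qed (simp add: assms)

text \<open>Iterating \<open>|\<L>\<Psi>|\<^sub>\<beta> \<le> (C\<^sub>E\<eta>)\<^sup>\<beta>|\<Psi>|\<^sub>\<beta> + C\<^sub>6 C\<^sub>E\<^sup>\<beta> |\<Psi>|\<^sub>\<infinity>\<close>, with \<open>|\<L>\<^sup>n\<Phi>|\<^sub>\<infinity> \<le> |\<Phi>|\<^sub>\<infinity>\<close>.\<close>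
lemma holder_semi_Lcal_iterate_le:
  assumes \<Phi>: "\<Phi> \<in> Cspace d p \<beta>"
  shows "holder_semi d p \<beta> ((\<L> ^^ n) \<Phi>)
      \<le> holder_semi d p \<beta> \<Phi> * ereal ((C_E * \<eta>) powr (\<beta> * real n))
        + ereal C6 * sup_norm \<Phi> * ereal (C_E powr \<beta> * (\<Sum>i. (C_E * \<eta>) powr (real i * \<beta>)))"
proof -
  define S where "S = real_of_ereal (sup_norm \<Phi>)"
  define q where "q = (C_E * \<eta>) powr \<beta>"
  define c where "c = C6 * C_E powr \<beta> * S"
  define a where "a n = real_of_ereal (holder_semi d p \<beta> ((\<L> ^^ n) \<Phi>))" for n
  have q: "0 \<le> q" "q < 1"
    unfolding q_def using C_E eta beta powr_less_mono2[of \<beta> "C_E * \<eta>" 1] by simp_all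
  have c: "0 \<le> c"
    unfolding c_def S_def using C6_nonneg sup_norm_nonneg[of \<Phi>] by (simp add: real_of_ereal_pos)
  have "a (Suc k) \<le> q * a k + c" for k
  proof -
    note iterate = Lcal_iterate[OF \<Phi>, of k]
    have "a (Suc k) \<le> q * a k + C6 * C_E powr \<beta> * real_of_ereal (sup_norm ((\<L> ^^ k) \<Phi>))"
      using Lcal_norms_le(2)[OF iterate[THEN conjunct1]] unfolding a_def q_def by simp
    also have "\<dots> \<le> q * a k + c"
      unfolding c_def S_def using iterate C6_nonneg by (intro add_left_mono mult_left_mono) auto
    finally show ?thesis .
  qed
  then have "a n \<le> q ^ n * a 0 + c * (\<Sum>i<n. q ^ i)"
    by (rule linear_recurrence_le) (rule q(1))
  also have "\<dots> \<le> q ^ n * a 0 + c * (\<Sum>i. q ^ i)"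
    using q c by (intro add_left_mono mult_left_mono sum_le_suminf summable_geometric) auto
  also have "\<dots> = a 0 * (C_E * \<eta>) powr (\<beta> * real n) +
      C6 * S * (C_E powr \<beta> * (\<Sum>i. (C_E * \<eta>) powr (real i * \<beta>)))"
  proof -
    have "q ^ i = (C_E * \<eta>) powr (real i * \<beta>)" for i
      unfolding q_def using C_E eta by (simp add: powr_power)
    then show ?thesis
      unfolding c_def by (simp add: mult.commute mult.left_commute)
  qed
  finally have bound: "a n \<le> a 0 * (C_E * \<eta>) powr (\<beta> * real n) +
      C6 * S * (C_E powr \<beta> * (\<Sum>i. (C_E * \<eta>) powr (real i * \<beta>)))" .
  have "holder_semi d p \<beta> ((\<L> ^^ n) \<Phi>) = ereal (a n)"
    unfolding a_def by (rule Cspace_norms_finite(2)[OF Lcal_iterate[OF \<Phi>, THEN conjunct1]])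
  moreover have "holder_semi d p \<beta> \<Phi> = ereal (a 0)" "sup_norm \<Phi> = ereal S"
    unfolding a_def S_def using Cspace_norms_finite[OF \<Phi>] by simp_all
  ultimately show ?thesis
    using bound by simp
qed

end

theorem mainTheorem10:
  fixes dI :: "real \<Rightarrow> real \<Rightarrow> real" and \<theta> \<eta> \<beta> C_E lam p :: real
    and \<tau> :: "real \<Rightarrow> real" and b :: nat and zeta :: "nat \<Rightarrow> real \<Rightarrow> real"
    and f h :: "pt \<Rightarrow> real" and E :: "pt \<Rightarrow> pt" and \<nu>0 :: "pt measure"
  defines "d \<equiv> dOm dI \<theta>"
  assumes dI_metric: "metric_on Iset dI"
    and dI_bdd: "bdd_above {dI s t | s t. s \<in> Iset \<and> t \<in> Iset}"
    and theta: "0 < \<theta>" "\<theta> < 1"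
    and tau_I: "\<forall>t\<in>Iset. \<tau> t \<in> Iset"
    and b_pos: "0 < b"
    and branches_inv: "\<forall>j<b. \<forall>t\<in>Iset. zeta j t \<in> Iset \<and> \<tau> (zeta j t) = t"
    and full_branches: "\<forall>t\<in>Iset. {s\<in>Iset. \<tau> s = t} = (\<lambda>j. zeta j t) ` {..<b}
                           \<and> card {s\<in>Iset. \<tau> s = t} = b"
    and fixed: "p \<in> Iset" "\<tau> p = p"
    and eta: "0 < \<eta>" "\<eta> < 1"
    and contract: "\<forall>j<b. \<forall>s\<in>Iset. \<forall>t\<in>Iset. dI (zeta j s) (zeta j t) \<le> \<eta> * dI s t"
    and beta: "0 < \<beta>" "\<beta> \<le> 1"
    and f_C: "f \<in> Cspace d p \<beta>"
    and nu_space: "space \<nu>0 = Omega" and nu_sets: "sets \<nu>0 = borel_d d"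
    and nu_prob: "prob_space \<nu>0"
    and nu_eig: "\<forall>\<Phi>\<in>Cspace d p \<beta>.
                   (\<integral>x. Pop b zeta p f \<Phi> x \<partial>\<nu>0) = lam * (\<integral>x. \<Phi> x \<partial>\<nu>0)"
    and lambda_def: "lam = (\<integral>x. Pop b zeta p f (\<lambda>_. 1) x \<partial>\<nu>0)"
    and h_C: "h \<in> Cspace d p \<beta>"
    and h_pos: "\<forall>x\<in>Omega. 0 < h x"
    and h_eig: "\<forall>x\<in>Omega. Pop b zeta p f h x = lam * h x"
    and h_norm: "(\<integral>x. h x \<partial>\<nu>0) = 1"
    and h_bound: "\<forall>x\<in>Omega. \<forall>y\<in>Omega.
        h x \<le> exp (real_of_ereal (holder_semi d p \<beta> f) * (\<eta> powr \<beta> / (1 - \<eta> powr \<beta>))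
                   * d x y powr \<beta>) * h y"
    and E_bij: "bij_betw E Omega Omega"
    and C_E: "0 < C_E" "C_E < 1 / \<eta>"
    and E_lip: "\<forall>n::int. \<forall>x\<in>Omega. \<forall>y\<in>Omega.
        d (shiftn n (inv_into Omega E x)) (shiftn n (inv_into Omega E y))
          \<le> C_E * d (shiftn n x) (shiftn n y)"
  shows "(\<forall>\<Phi>\<in>Cspace d p \<beta>. Lcal b zeta p f h lam E \<Phi> \<in> Cspace d p \<beta>) \<and>
    (\<exists>C6::real. \<forall>\<Phi>\<in>Cspace d p \<beta>. \<forall>n::nat. n \<ge> 1 \<longrightarrow>
       holder_semi d p \<beta> ((Lcal b zeta p f h lam E ^^ n) \<Phi>)
         \<le> holder_semi d p \<beta> \<Phi> * ereal ((C_E * \<eta>) powr (\<beta> * real n))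
           + ereal C6 * sup_norm \<Phi> * ereal (C_E powr \<beta> * (\<Sum>i. (C_E * \<eta>) powr (real i * \<beta>))))"
proof -
  interpret seq_space dI \<theta> p d
    by unfold_locales (use d_def dI_metric dI_bdd theta fixed in auto)
  have shift0: "shiftn 0 x = x" for x
    unfolding shiftn_def by simp
  interpret coupled_setting dI \<theta> p d b zeta \<eta> \<beta> f h lam
      "real_of_ereal (sup_norm f)" "real_of_ereal (holder_semi d p \<beta> f)"
      "real_of_ereal (sup_norm h)" "real_of_ereal (holder_semi d p \<beta> h)" E C_E
  proof unfold_locales
    show "C_E * \<eta> < 1"
      using C_E eta by (simp add: field_simps)
    show "\<forall>x\<in>Omega. \<forall>y\<in>Omega. d (inv_into Omega E x) (inv_into Omega E y) \<le> C_E * d x y"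
      using spec[OF E_lip, of 0] by (simp add: shift0)
  qed (use b_pos branches_inv eta contract beta Cspace_holder_bounded f_C h_C h_pos h_eig h_bound
         E_bij C_E in auto)
  show ?thesis
    using Lcal_in_Cspace holder_semi_Lcal_iterate_le by blast
qed

end
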